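(* For $\kappa=2,3,\dots$ and all $\mathrm b\in\mathbb R$, on the line $\mathbf C_{a^\kappa}=\{(\zeta_\kappa,\mathrm b):\mathrm b\in\mathbb R\}$ one has $\rho(\zeta_\kappa,\mathrm b)=\kappa\,\theta(\zeta_\kappa,\mathrm b)$ and $$\theta(\zeta_\kappa,\mathrm b)=\begin{cases}0,&\mathrm b>2,\\[2pt] \dfrac{\arccos(\mathrm b/2)}{\kappa\arccos(\mathrm b/2)+\pi},&|\mathrm b|\le2,\\[6pt] \dfrac1{\kappa+1},&\mathrm b<-2.\end{cases}$$ Symmetrically, for $\ell\ge2$, on the line $\mathbf C_{b^\ell}=\{(\mathrm a,\zeta_\ell):\mathrm a\in\mathbb R\}$ one has $\theta(\mathrm a,\zeta_\ell)=\theta(\zeta_\ell,\mathrm a)$ (given by the same formula with $\mathrm b$ replaced by $\mathrm a$ and $\kappa$ by $\ell$) and $\rho(\mathrm a,\zeta_\ell)=1-\rho(\zeta_\ell,\mathrm a)$.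
   Context: For real parameters $\mathrm a,\mathrm b$, the map $F:\mathbb R^2\to\mathbb R^2$ is $F(x,y)=(\mathrm a x-y,x)$ if $x>0$ or ($x=0$ and $y\le0$), and $F(x,y)=(\mathrm b x-y,x)$ otherwise. $\zeta_j=2\cos(\pi/j)$. To an $F$-orbit $(z_t)$ associate the word $W=w_0w_1\cdots$ with $w_t=a$ if $z_t$ lies in the open right half-plane or on the negative $y$-axis, and $w_t=b$ otherwise. $W_n$ is the length-$n$ prefix, and $|W_n|_u$ counts occurrences of the factor $u$. The rotation number is $\theta(\mathrm a,\mathrm b)=\lim_n\frac1n|W_n|_{ab}$ (independent of the orbit). The density is $\rho(\mathrm a,\mathrm b)=\lim_n\frac1{2n}(|W_n^+|_a+|W_n^-|_a)$, with $W^\pm$ the word of the orbit of $(0,\pm1)$. *)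

theory Defs
  imports Complex_Main
begin

definition Fmap :: "real \<Rightarrow> real \<Rightarrow> real \<times> real \<Rightarrow> real \<times> real" where
  "Fmap a b z = (let x = fst z; y = snd z in
     if x > 0 \<or> (x = 0 \<and> y \<le> 0) then (a * x - y, x) else (b * x - y, x))"

definition zeta :: "nat \<Rightarrow> real" where
  "zeta j = 2 * cos (pi / real j)"

definition letterA :: "real \<times> real \<Rightarrow> bool" where
  "letterA z \<longleftrightarrow> fst z > 0 \<or> (fst z = 0 \<and> snd z < 0)"

definition wordA :: "real \<Rightarrow> real \<Rightarrow> real \<times> real \<Rightarrow> nat \<Rightarrow> bool" where
  "wordA a b z t = letterA ((Fmap a b ^^ t) z)"

definition count_ab :: "real \<Rightarrow> real \<Rightarrow> real \<times> real \<Rightarrow> nat \<Rightarrow> nat" where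
  "count_ab a b z n = card {t. t + 1 < n \<and> wordA a b z t \<and> \<not> wordA a b z (t + 1)}"

definition count_a :: "real \<Rightarrow> real \<Rightarrow> real \<times> real \<Rightarrow> nat \<Rightarrow> nat" where
  "count_a a b z n = card {t. t < n \<and> wordA a b z t}"

definition theta_seq :: "real \<Rightarrow> real \<Rightarrow> real \<times> real \<Rightarrow> nat \<Rightarrow> real" where
  "theta_seq a b z n = real (count_ab a b z n) / real n"

definition rho_seq :: "real \<Rightarrow> real \<Rightarrow> nat \<Rightarrow> real" where
  "rho_seq a b n = (real (count_a a b (0, 1) n) + real (count_a a b (0, -1) n)) / (2 * real n)"

definition theta_formula :: "nat \<Rightarrow> real \<Rightarrow> real" where
  "theta_formula k b =
     (if b > 2 then 0
      else if \<bar>b\<bar> \<le> 2 then arccos (b / 2) / (real k * arccos (b / 2) + pi)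
      else 1 / (real k + 1))"

end

theory Submission
  imports Defs "HOL-Library.Product_Plus"
begin

text \<open>
  Write \<open>lin c\<close> for the linear map \<open>(x, y) \<mapsto> (c x - y, x)\<close>, so that \<open>F\<close> acts by \<open>lin a\<close> on the
  a-region and by \<open>lin b\<close> on the b-region. For \<open>a = \<zeta>\<^sub>k = 2 cos (\<pi>/k)\<close> one has
  \<open>(lin a)\<^sup>k = -id\<close>, and an orbit entering the a-region at a point \<open>y\<close> (with \<open>x \<ge> 0 > y\<close>) stays
  there for exactly \<open>k\<close> steps and leaves it at \<open>-y\<close>. Hence every orbit word is eventually a
  concatenation of blocks \<open>a\<^sup>k b\<^bsup>N i\<^esup>\<close>, where \<open>N i\<close> is the time \<open>lin b\<close> needs to bring the
  \<open>i\<close>-th exit point back into the a-region. If the partial sums of the \<open>N i\<close> stay within bounded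
  distance of \<open>m L\<close>, then \<open>\<theta> = 1/(k + L)\<close> and the density of a's is \<open>k/(k + L)\<close>.
  For \<open>b = 2 cos \<beta>\<close> with \<open>0 < \<beta> < \<pi>\<close>, \<open>lin b\<close> is a rotation by \<open>\<beta>\<close> in suitable coordinates
  and each b-run turns the angle by \<open>\<pi>\<close> up to a bounded error, so \<open>L = \<pi>/\<beta>\<close>; for \<open>b \<le> -2\<close>
  the b-runs have length 1 or 2, and at most one has length 2, so \<open>L = 1\<close>; for \<open>b \<ge> 2\<close> the b-region
  is absorbing and there is at most one factor \<open>ab\<close>. The line \<open>b = \<zeta>\<^sub>\<ell>\<close> reduces to the line
  \<open>a = \<zeta>\<^sub>\<ell>\<close> by the symmetry \<open>F\<^sub>a\<^sub>,\<^sub>b(-z) = -F\<^sub>b\<^sub>,\<^sub>a(z)\<close>, which exchanges the two letters.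
\<close>

definition count_lt :: "(nat \<Rightarrow> bool) \<Rightarrow> nat \<Rightarrow> nat" where
  "count_lt P n = card {t. t < n \<and> P t}"

definition ab_at :: "(nat \<Rightarrow> bool) \<Rightarrow> nat \<Rightarrow> bool" where
  "ab_at w t \<longleftrightarrow> 0 < t \<and> w (t - 1) \<and> \<not> w t"

lemma count_lt_0 [simp]: "count_lt P 0 = 0"
  by (simp add: count_lt_def)

lemma count_lt_Suc: "count_lt P (Suc n) = count_lt P n + of_bool (P n)"
proof -
  have "{t. t < Suc n \<and> P t} = (if P n then insert n {t. t < n \<and> P t} else {t. t < n \<and> P t})"
    by (auto simp: less_Suc_eq)
  then show ?thesis by (simp add: count_lt_def)
qed

lemma count_lt_add: "count_lt P (n + d) = count_lt P n + count_lt (\<lambda>j. P (n + j)) d"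
  by (induction d) (simp_all add: count_lt_Suc)

lemma count_lt_mono: "m \<le> n \<Longrightarrow> count_lt P m \<le> count_lt P n"
  unfolding count_lt_def by (rule card_mono) auto

lemma count_lt_not_add: "count_lt (\<lambda>t. \<not> P t) n + count_lt P n = n"
  by (induction n) (auto simp: count_lt_Suc)

lemma count_lt_ab_at_not:
  "\<bar>real (count_lt (ab_at (\<lambda>t. \<not> w t)) n) - real (count_lt (ab_at w) n)\<bar> \<le> 1"
proof (cases n)
  case 0
  then show ?thesis by simp
next
  case (Suc m)
  \<comment> \<open>factors \<open>ba\<close> and \<open>ab\<close> alternate, so their numbers differ by \<open>[w\<^sub>m] - [w\<^sub>0]\<close>\<close>
  have "real (count_lt (ab_at (\<lambda>t. \<not> w t)) (Suc m)) - real (count_lt (ab_at w) (Suc m))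
      = of_bool (w m) - of_bool (w 0)"
    by (induction m) (auto simp: count_lt_Suc ab_at_def)
  then show ?thesis using Suc by simp
qed

lemma count_ab_eq_count_lt: "count_ab a b z n = count_lt (ab_at (wordA a b z)) n"
proof -
  let ?S = "{t. t + 1 < n \<and> wordA a b z t \<and> \<not> wordA a b z (t + 1)}"
  have "Suc ` ?S = {t. t < n \<and> ab_at (wordA a b z) t}"
    by (auto simp: ab_at_def image_iff gr0_conv_Suc)
  then show ?thesis
    using card_image[OF inj_Suc, of ?S] by (simp add: count_ab_def count_lt_def)
qed

lemma count_a_eq_count_lt: "count_a a b z n = count_lt (wordA a b z) n"
  by (simp add: count_a_def count_lt_def)

lemma theta_seq_eq: "theta_seq a b z = (\<lambda>n. real (count_lt (ab_at (wordA a b z)) n) / real n)"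
  by (simp add: fun_eq_iff theta_seq_def count_ab_eq_count_lt)

lemma rho_seq_eq:
  "rho_seq a b = (\<lambda>n. (real (count_lt (wordA a b (0, 1)) n) / real n
     + real (count_lt (wordA a b (0, -1)) n) / real n) / 2)"
  by (simp add: fun_eq_iff rho_seq_def count_a_eq_count_lt add_divide_distrib)

lemma ratio_tendsto_of_bounded_deviation:
  fixes f :: "nat \<Rightarrow> real"
  assumes K: "K > 0" and dev: "\<And>n. n \<ge> n0 \<Longrightarrow> \<bar>K * f n - c * real n\<bar> \<le> D"
  shows "(\<lambda>n. f n / real n) \<longlonglongrightarrow> c / K"
proof -
  have g0: "(\<lambda>n. (D / K) * inverse (real n)) \<longlonglongrightarrow> 0"
    using tendsto_mult[OF tendsto_const lim_inverse_n, of "D / K"] by simp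
  have ev: "eventually (\<lambda>n. \<bar>f n / real n - c / K\<bar> \<le> (D / K) * inverse (real n)) sequentially"
  proof (rule eventually_sequentiallyI[of "max n0 1"])
    fix n assume n: "max n0 1 \<le> n"
    then have n_pos: "real n > 0" by auto
    have "f n / real n - c / K = (K * f n - c * real n) / (K * real n)"
      using K n_pos by (simp add: field_simps)
    then have "\<bar>f n / real n - c / K\<bar> = \<bar>K * f n - c * real n\<bar> / (K * real n)"
      using K n_pos by (simp add: abs_divide abs_mult)
    also have "\<dots> \<le> D / (K * real n)"
      using dev[of n] n K n_pos by (intro divide_right_mono) auto
    finally show "\<bar>f n / real n - c / K\<bar> \<le> (D / K) * inverse (real n)"
      by (simp add: field_simps)
  qed
  have "(\<lambda>n. f n / real n - c / K) \<longlonglongrightarrow> 0"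
    by (rule tendsto_0_le[OF g0, where K = 1], rule eventually_mono[OF ev])
      (metis abs_ge_self order_trans real_norm_def mult_1_right)
  from tendsto_add[OF this tendsto_const[of "c / K"]] show ?thesis
    by simp
qed

lemma ratio_tendsto_0_of_bounded:
  fixes f :: "nat \<Rightarrow> real"
  shows "(\<And>n. \<bar>f n\<bar> \<le> D) \<Longrightarrow> (\<lambda>n. f n / real n) \<longlonglongrightarrow> 0"
  using ratio_tendsto_of_bounded_deviation[of 1 0 f 0 D] by simp

lemma strict_mono_bracket:
  fixes e :: "nat \<Rightarrow> nat"
  assumes e: "strict_mono e" and n: "e 0 \<le> n"
  shows "\<exists>m. e m \<le> n \<and> n < e (Suc m)"
  using n
proof (induction n rule: nat_induct_at_least)
  case base
  then show ?case using strict_monoD[OF e, of 0 1] by auto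
next
  case (Suc n)
  then obtain m where m: "e m \<le> n" "n < e (Suc m)" by auto
  show ?case
  proof (cases "Suc n < e (Suc m)")
    case True
    then show ?thesis using m by (intro exI[of _ m]) auto
  next
    case False
    then show ?thesis
      using m strict_monoD[OF e, of "Suc m" "Suc (Suc m)"] by (intro exI[of _ "Suc m"]) auto
  qed
qed

lemma ratio_tendsto_of_linear_on_blocks:
  fixes f :: "nat \<Rightarrow> real" and e :: "nat \<Rightarrow> nat"
  assumes f: "mono f" and e: "strict_mono e" and K: "K > 0" and \<alpha>: "\<alpha> \<ge> 0"
    and f_e: "\<And>m. f (e m) = f (e 0) + \<alpha> * real m"
    and e_dev: "\<And>m. \<bar>real (e m) - real m * K\<bar> \<le> D"
  shows "(\<lambda>n. f n / real n) \<longlonglongrightarrow> \<alpha> / K"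
proof (rule ratio_tendsto_of_bounded_deviation[OF K])
  fix n assume "e 0 \<le> n"
  then obtain m where m: "e m \<le> n" "n < e (Suc m)"
    using strict_mono_bracket[OF e] by blast
  have "f (e m) \<le> f n" "f n \<le> f (e (Suc m))"
    using m monoD[OF f] by auto
  then have "\<bar>f n - f (e 0) - \<alpha> * real m\<bar> \<le> \<alpha>"
    using f_e[of m] f_e[of "Suc m"] \<alpha> by (simp add: algebra_simps)
  then have X: "\<bar>K * (f n - f (e 0) - \<alpha> * real m)\<bar> \<le> K * \<alpha>"
    using K by (simp add: abs_mult)
  have "real (e m) \<le> real n" "real n \<le> real (e (Suc m))"
    using m by auto
  moreover have "\<bar>real (e (Suc m)) - real m * K - K\<bar> \<le> D"
    using e_dev[of "Suc m"] by (simp add: algebra_simps)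
  ultimately have "\<bar>real n - real m * K\<bar> \<le> D + K"
    using e_dev[of m] K by arith
  then have Y: "\<bar>\<alpha> * (real n - real m * K)\<bar> \<le> \<alpha> * (D + K)"
    using \<alpha> by (simp add: abs_mult mult_left_mono)
  have "K * f n - \<alpha> * real n
      = K * (f n - f (e 0) - \<alpha> * real m) + K * f (e 0) - \<alpha> * (real n - real m * K)"
    by (simp add: algebra_simps)
  then show "\<bar>K * f n - \<alpha> * real n\<bar> \<le> K * \<alpha> + \<bar>K * f (e 0)\<bar> + \<alpha> * (D + K)"
    using X Y by linarith
qed

subsection \<open>Words made of blocks \<open>a\<^sup>k b\<^bsup>N i\<^esup>\<close>\<close>

definition block_word :: "(nat \<Rightarrow> bool) \<Rightarrow> nat \<Rightarrow> (nat \<Rightarrow> nat) \<Rightarrow> (nat \<Rightarrow> nat) \<Rightarrow> bool" where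
  "block_word w k e N \<longleftrightarrow>
     (\<forall>i. e (Suc i) = e i + (k + N i) \<and> 0 < N i \<and> (\<forall>j < k + N i. w (e i + j) \<longleftrightarrow> j < k))"

lemma block_word_count_a:
  assumes "block_word w k e N"
  shows "count_lt w (e (Suc i)) = count_lt w (e i) + k"
proof -
  have "{j. j < k + N i \<and> w (e i + j)} = {..<k}"
    using assms by (auto simp: block_word_def)
  then have "count_lt (\<lambda>j. w (e i + j)) (k + N i) = k"
    by (simp add: count_lt_def)
  then show ?thesis
    using assms by (simp add: block_word_def count_lt_add)
qed

lemma block_word_count_ab:
  assumes B: "block_word w k e N" and k: "0 < k"
  shows "count_lt (ab_at w) (e (Suc i)) = Suc (count_lt (ab_at w) (e i))"
proof -
  have w: "\<And>j. j < k + N i \<Longrightarrow> w (e i + j) \<longleftrightarrow> j < k" and N: "0 < N i"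
    using B by (auto simp: block_word_def)
  have "{j. j < k + N i \<and> ab_at w (e i + j)} = {k}"
  proof (intro set_eqI iffI)
    fix j assume "j \<in> {j. j < k + N i \<and> ab_at w (e i + j)}"
    then have j: "j < k + N i" "w (e i + j - 1)" "\<not> w (e i + j)"
      by (auto simp: ab_at_def)
    then have "k \<le> j" using w by force
    moreover have "j - 1 < k"
      using j(2) w[of "j - 1"] j(1) \<open>k \<le> j\<close> k by (simp add: add_diff_eq)
    ultimately show "j \<in> {k}" by simp
  next
    fix j assume "j \<in> {k}"
    then show "j \<in> {j. j < k + N i \<and> ab_at w (e i + j)}"
      using w[of "k - 1"] w[of k] k N by (auto simp: ab_at_def add_diff_eq)
  qed
  then have "count_lt (\<lambda>j. ab_at w (e i + j)) (k + N i) = 1"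
    by (simp add: count_lt_def)
  then show ?thesis
    using B by (simp add: block_word_def count_lt_add)
qed

lemma block_word_frequencies:
  assumes B: "block_word w k e N" and k: "0 < k" and L: "L > 0"
    and dev: "\<And>m. \<bar>(\<Sum>i<m. real (N i)) - real m * L\<bar> \<le> C"
  shows "(\<lambda>n. real (count_lt (ab_at w) n) / real n) \<longlonglongrightarrow> 1 / (real k + L)"
    and "(\<lambda>n. real (count_lt w n) / real n) \<longlonglongrightarrow> real k / (real k + L)"
proof -
  have e_Suc: "e (Suc i) = e i + (k + N i)" for i
    using B by (simp add: block_word_def)
  then have e: "strict_mono e"
    using k by (simp add: strict_mono_Suc_iff)
  have e_eq: "real (e m) = real (e 0) + real m * real k + (\<Sum>i<m. real (N i))" for m
    by (induction m) (simp_all add: e_Suc algebra_simps)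
  have e_dev: "\<bar>real (e m) - real m * (real k + L)\<bar> \<le> real (e 0) + C" for m
    using dev[of m] e_eq[of m] unfolding abs_le_iff by (simp add: algebra_simps)
  have K: "real k + L > 0" using L by simp
  have mono_count: "mono (\<lambda>n. real (count_lt P n))" for P
    by (intro monoI) (simp add: count_lt_mono)
  have "real (count_lt (ab_at w) (e m)) = real (count_lt (ab_at w) (e 0)) + 1 * real m" for m
    by (induction m) (simp_all add: block_word_count_ab[OF B k])
  from ratio_tendsto_of_linear_on_blocks[OF mono_count e K _ this e_dev]
  show "(\<lambda>n. real (count_lt (ab_at w) n) / real n) \<longlonglongrightarrow> 1 / (real k + L)"
    by simp
  have "real (count_lt w (e m)) = real (count_lt w (e 0)) + real k * real m" for m
    by (induction m) (simp_all add: block_word_count_a[OF B] algebra_simps)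
  from ratio_tendsto_of_linear_on_blocks[OF mono_count e K _ this e_dev]
  show "(\<lambda>n. real (count_lt w n) / real n) \<longlonglongrightarrow> real k / (real k + L)"
    by simp
qed


definition lin :: "real \<Rightarrow> real \<times> real \<Rightarrow> real \<times> real" where
  "lin c z = (c * fst z - snd z, fst z)"

lemma lin_nonzero: "z \<noteq> (0, 0) \<Longrightarrow> lin c z \<noteq> (0, 0)"
  by (cases z) (auto simp: lin_def)

lemma funpow_lin_nonzero: "z \<noteq> (0, 0) \<Longrightarrow> (lin c ^^ j) z \<noteq> (0, 0)"
  by (induction j) (auto simp: lin_nonzero)

lemma Fmap_eq_lin: "z \<noteq> (0, 0) \<Longrightarrow> Fmap a b z = (if letterA z then lin a z else lin b z)"
  by (cases z) (auto simp: Fmap_def letterA_def lin_def Let_def)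

lemma funpow_Fmap_nonzero: "z \<noteq> (0, 0) \<Longrightarrow> (Fmap a b ^^ t) z \<noteq> (0, 0)"
  by (induction t) (auto simp: Fmap_eq_lin lin_nonzero)

lemma letterA_uminus: "z \<noteq> (0, 0) \<Longrightarrow> letterA (- z) \<longleftrightarrow> \<not> letterA z"
  by (cases z) (auto simp: letterA_def)

lemma Fmap_uminus: "Fmap a b (- z) = - Fmap b a z"
  by (cases z) (auto simp: Fmap_def Let_def)

lemma funpow_Fmap_uminus: "(Fmap a b ^^ t) (- z) = - (Fmap b a ^^ t) z"
  by (induction t) (auto simp: Fmap_uminus)

lemma funpow_Fmap_run_A:
  assumes "z \<noteq> (0, 0)" and "\<And>i. i < j \<Longrightarrow> letterA ((lin a ^^ i) z)"
  shows "(Fmap a b ^^ j) z = (lin a ^^ j) z"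
  using assms(2)
proof (induction j)
  case (Suc j)
  then show ?case using funpow_lin_nonzero[OF assms(1)] by (simp add: Fmap_eq_lin)
qed simp

lemma funpow_Fmap_run_B:
  assumes "z \<noteq> (0, 0)" and "\<And>i. i < j \<Longrightarrow> \<not> letterA ((lin b ^^ i) z)"
  shows "(Fmap a b ^^ j) z = (lin b ^^ j) z"
  using assms(2)
proof (induction j)
  case (Suc j)
  then show ?case using funpow_lin_nonzero[OF assms(1)] by (simp add: Fmap_eq_lin)
qed simp

text \<open>The points at which a run of a's begins.\<close>
definition entry :: "real \<times> real \<Rightarrow> bool" where
  "entry z \<longleftrightarrow> 0 \<le> fst z \<and> snd z < 0"

lemma entry_nonzero: "entry z \<Longrightarrow> z \<noteq> (0, 0)"
  by (auto simp: entry_def)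

lemma entry_letterA: "entry z \<Longrightarrow> letterA z"
  by (cases z) (auto simp: letterA_def entry_def)

lemma entry_uminus_not_letterA: "entry z \<Longrightarrow> \<not> letterA (- z)"
  using letterA_uminus entry_nonzero entry_letterA by blast

lemma entry_first_letterA:
  assumes "w \<noteq> (0, 0)" and "\<not> letterA w" and "letterA ((lin c ^^ j) w)"
    and "\<And>i. i < j \<Longrightarrow> \<not> letterA ((lin c ^^ i) w)"
  shows "entry ((lin c ^^ j) w)"
proof -
  obtain i where j: "j = Suc i"
    using assms(2,3) by (cases j) auto
  obtain x y where p: "(lin c ^^ i) w = (x, y)"
    by (cases "(lin c ^^ i) w")
  have "(x, y) \<noteq> (0, 0)" "\<not> letterA (x, y)" "letterA (lin c (x, y))"
    using funpow_lin_nonzero[OF assms(1)] assms(3) assms(4)[of i] p j by auto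
  then have "entry (lin c (x, y))"
    by (cases "x = 0") (auto simp: letterA_def lin_def entry_def)
  then show ?thesis using p j by simp
qed

subsection \<open>The a-runs on the line \<open>a = \<zeta>\<^sub>k\<close>\<close>

text \<open>\<open>cheb k (j + 1) = U\<^sub>j (cos (\<pi>/k))\<close> with \<open>U\<^sub>j\<close> the Chebyshev polynomials of the second kind; these
  are the entries of the powers of \<open>lin (zeta k)\<close>.\<close>
definition cheb :: "nat \<Rightarrow> real \<Rightarrow> real" where
  "cheb k t = sin (t * pi / real k) / sin (pi / real k)"

lemma sin_pi_div_pos: "k \<ge> 2 \<Longrightarrow> sin (pi / real k) > 0"
  by (rule sin_gt_zero) (auto simp: field_simps)

lemma cheb_rec: "k \<ge> 2 \<Longrightarrow> zeta k * cheb k (t + 1) = cheb k (t + 2) + cheb k t"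
proof -
  assume k: "k \<ge> 2"
  define \<alpha> where "\<alpha> = pi / real k"
  have s: "sin \<alpha> > 0" using sin_pi_div_pos[OF k] by (simp add: \<alpha>_def)
  have angles: "(t + 2) * pi / real k = (t + 1) * \<alpha> + \<alpha>" "t * pi / real k = (t + 1) * \<alpha> - \<alpha>"
    "(t + 1) * pi / real k = (t + 1) * \<alpha>"
    using k by (simp_all add: \<alpha>_def field_simps)
  show ?thesis
    unfolding cheb_def zeta_def angles \<alpha>_def[symmetric] sin_add sin_diff
    using s by (simp add: field_simps)
qed

lemma funpow_lin_zeta:
  assumes k: "k \<ge> 2"
  shows "(lin (zeta k) ^^ j) (x, y) =
    (x * cheb k (real j + 1) - y * cheb k (real j), x * cheb k (real j) - y * cheb k (real j - 1))"
proof (induction j)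
  case 0
  have "sin (- (pi / real k)) = - sin (pi / real k)" by simp
  then show ?case using sin_pi_div_pos[OF k] by (simp add: cheb_def)
next
  case (Suc j)
  have r1: "zeta k * cheb k (real j + 1) = cheb k (real j + 2) + cheb k (real j)"
    using cheb_rec[OF k] .
  have r0: "zeta k * cheb k (real j) = cheb k (real j + 1) + cheb k (real j - 1)"
    using cheb_rec[OF k, of "real j - 1"] by (simp add: add.commute)
  have "zeta k * (x * cheb k (real j + 1) - y * cheb k (real j)) - (x * cheb k (real j) - y * cheb k (real j - 1))
      = x * (zeta k * cheb k (real j + 1)) - y * (zeta k * cheb k (real j)) - x * cheb k (real j) + y * cheb k (real j - 1)"
    by (simp add: algebra_simps)
  also have "\<dots> = x * cheb k (real j + 2) - y * cheb k (real j + 1)"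
    unfolding r1 r0 by (simp add: algebra_simps)
  finally show ?case using Suc by (simp add: lin_def add.commute add.left_commute)
qed

lemma cheb_nonneg: "k \<ge> 2 \<Longrightarrow> 0 \<le> t \<Longrightarrow> t \<le> real k \<Longrightarrow> cheb k t \<ge> 0"
  unfolding cheb_def using sin_pi_div_pos[of k]
  by (intro divide_nonneg_pos sin_ge_zero) (auto simp: field_simps)

lemma cheb_pos: "k \<ge> 2 \<Longrightarrow> 0 < t \<Longrightarrow> t < real k \<Longrightarrow> cheb k t > 0"
  unfolding cheb_def using sin_pi_div_pos[of k]
  by (intro divide_pos_pos sin_gt_zero) (auto simp: field_simps)

lemma cheb_at_k:
  assumes k: "k \<ge> 2"
  shows "cheb k (real k) = 0" and "cheb k (real k + 1) = -1" and "cheb k (real k - 1) = 1"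
proof -
  have s: "sin (pi / real k) > 0" using sin_pi_div_pos[OF k] .
  show "cheb k (real k) = 0" using k by (simp add: cheb_def)
  have "(real k + 1) * pi / real k = pi + pi / real k" using k by (simp add: field_simps)
  then show "cheb k (real k + 1) = -1" using s by (simp add: cheb_def)
  have "(real k - 1) * pi / real k = pi - pi / real k" using k by (simp add: field_simps)
  then show "cheb k (real k - 1) = 1" using s by (simp add: cheb_def sin_diff)
qed

lemma funpow_lin_zeta_k: "k \<ge> 2 \<Longrightarrow> (lin (zeta k) ^^ k) z = - z"
  by (cases z) (simp add: funpow_lin_zeta cheb_at_k)

lemma letterA_funpow_lin_zeta:
  assumes k: "k \<ge> 2" and E: "entry z" and j: "j < k"
  shows "letterA ((lin (zeta k) ^^ j) z)"
proof (cases "j = 0")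
  case True
  then show ?thesis using entry_letterA[OF E] by simp
next
  case False
  obtain x y where z: "z = (x, y)" by (cases z)
  have "x \<ge> 0" "y < 0" using E z by (auto simp: entry_def)
  moreover have "cheb k (real j + 1) \<ge> 0" "cheb k (real j) > 0"
    using k j False by (auto intro: cheb_nonneg cheb_pos)
  ultimately have "x * cheb k (real j + 1) - y * cheb k (real j) > 0"
    by (smt (verit) mult_nonneg_nonneg mult_neg_pos)
  then show ?thesis using z k by (simp add: funpow_lin_zeta letterA_def)
qed

lemma funpow_Fmap_zeta_run:
  assumes "k \<ge> 2" and "entry y" and "j \<le> k"
  shows "(Fmap (zeta k) b ^^ j) y = (lin (zeta k) ^^ j) y"
  using assms by (intro funpow_Fmap_run_A entry_nonzero letterA_funpow_lin_zeta) auto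

lemma funpow_Fmap_zeta_k: "k \<ge> 2 \<Longrightarrow> entry y \<Longrightarrow> (Fmap (zeta k) b ^^ k) y = - y"
  by (simp add: funpow_Fmap_zeta_run funpow_lin_zeta_k)

subsection \<open>The return map to the entry points\<close>

definition reaches_A :: "real \<Rightarrow> bool" where
  "reaches_A c \<longleftrightarrow> (\<forall>w. w \<noteq> (0, 0) \<longrightarrow> (\<exists>j. letterA ((lin c ^^ j) w)))"

text \<open>An a-run starting at an entry point \<open>y\<close> ends at \<open>-y\<close>; \<open>b_run b y\<close> is the length of the
  b-run that follows, and \<open>return_pt b y\<close> the entry point at which it ends.\<close>
definition b_run :: "real \<Rightarrow> real \<times> real \<Rightarrow> nat" where
  "b_run b y = (LEAST j. letterA ((lin b ^^ j) (- y)))"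

definition return_pt :: "real \<Rightarrow> real \<times> real \<Rightarrow> real \<times> real" where
  "return_pt b y = (lin b ^^ b_run b y) (- y)"

lemma uminus_nonzero: "z \<noteq> (0, 0) \<Longrightarrow> - z \<noteq> (0 :: real, 0 :: real)"
  by (cases z) auto

lemma letterA_return_pt:
  assumes H: "reaches_A b" and E: "entry y"
  shows "letterA (return_pt b y)"
proof -
  obtain j where "letterA ((lin b ^^ j) (- y))"
    using H uminus_nonzero[OF entry_nonzero[OF E]] unfolding reaches_A_def by blast
  then show ?thesis unfolding return_pt_def b_run_def by (rule LeastI)
qed

lemma not_letterA_before_return: "j < b_run b y \<Longrightarrow> \<not> letterA ((lin b ^^ j) (- y))"
  unfolding b_run_def by (rule not_less_Least)

lemma b_run_pos:
  assumes "reaches_A b" and "entry y"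
  shows "0 < b_run b y"
proof (rule ccontr)
  assume "\<not> 0 < b_run b y"
  then have "return_pt b y = - y" by (simp add: return_pt_def)
  then show False
    using letterA_return_pt[OF assms] entry_uminus_not_letterA[OF assms(2)] by simp
qed

lemma entry_return_pt: "reaches_A b \<Longrightarrow> entry y \<Longrightarrow> entry (return_pt b y)"
  unfolding return_pt_def
  by (intro entry_first_letterA uminus_nonzero entry_nonzero entry_uminus_not_letterA
      letterA_return_pt[unfolded return_pt_def] not_letterA_before_return)

lemma b_run_eqI:
  assumes "\<And>i. i < j \<Longrightarrow> \<not> letterA ((lin b ^^ i) (- y))" and "letterA ((lin b ^^ j) (- y))"
  shows "b_run b y = j"
  unfolding b_run_def
proof (rule Least_equality)
  show "letterA ((lin b ^^ j) (- y))" by fact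
next
  fix i assume "letterA ((lin b ^^ i) (- y))"
  then show "j \<le> i" using assms(1) by (meson not_le)
qed

lemma Fmap_orbit_from_entry:
  assumes k: "k \<ge> 2" and H: "reaches_A b" and E: "entry y"
  shows "j < k \<Longrightarrow> letterA ((Fmap (zeta k) b ^^ j) y)"
    and "k \<le> j \<Longrightarrow> j < k + b_run b y \<Longrightarrow> \<not> letterA ((Fmap (zeta k) b ^^ j) y)"
    and "(Fmap (zeta k) b ^^ (k + b_run b y)) y = return_pt b y"
proof -
  let ?F = "Fmap (zeta k) b"
  have b_part: "(?F ^^ (k + i)) y = (lin b ^^ i) (- y)" if "i \<le> b_run b y" for i
  proof -
    have "(?F ^^ (k + i)) y = (?F ^^ i) (- y)"
      using funpow_Fmap_zeta_k[OF k E] by (simp add: funpow_add add.commute[of k])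
    also have "\<dots> = (lin b ^^ i) (- y)"
      using that by (intro funpow_Fmap_run_B uminus_nonzero entry_nonzero[OF E]
          not_letterA_before_return) auto
    finally show ?thesis .
  qed
  show "j < k \<Longrightarrow> letterA ((?F ^^ j) y)"
    using funpow_Fmap_zeta_run[OF k E] letterA_funpow_lin_zeta[OF k E] by simp
  show "\<not> letterA ((?F ^^ j) y)" if "k \<le> j" "j < k + b_run b y"
  proof -
    define i where "i = j - k"
    have "j = k + i" "i < b_run b y" using that by (auto simp: i_def)
    then show ?thesis using b_part[of i] not_letterA_before_return[of i] by simp
  qed
  show "(?F ^^ (k + b_run b y)) y = return_pt b y"
    using b_part by (simp add: return_pt_def)
qed

lemma exists_entry_on_orbit:
  assumes k: "k \<ge> 2" and H: "reaches_A b" and z: "z \<noteq> (0, 0)"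
  shows "\<exists>t. entry ((Fmap (zeta k) b ^^ t) z)"
proof -
  let ?F = "Fmap (zeta k) b"
  have "\<exists>i. \<not> letterA ((lin (zeta k) ^^ i) z)"
    using letterA_uminus[OF z] funpow_lin_zeta_k[OF k, of z]
    by (metis funpow_0)
  then obtain i where i: "\<not> letterA ((lin (zeta k) ^^ i) z)"
    and before_i: "\<And>i'. i' < i \<Longrightarrow> letterA ((lin (zeta k) ^^ i') z)"
    using exists_least_iff[of "\<lambda>i. \<not> letterA ((lin (zeta k) ^^ i) z)"] by blast
  define p where "p = (lin (zeta k) ^^ i) z"
  have Fi: "(?F ^^ i) z = p"
    unfolding p_def using z before_i by (rule funpow_Fmap_run_A)
  have p: "p \<noteq> (0, 0)" "\<not> letterA p"
    using funpow_lin_nonzero[OF z] i by (auto simp: p_def)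
  then have "\<exists>j. letterA ((lin b ^^ j) p)"
    using H unfolding reaches_A_def by blast
  then obtain j where j: "letterA ((lin b ^^ j) p)"
    and before_j: "\<And>j'. j' < j \<Longrightarrow> \<not> letterA ((lin b ^^ j') p)"
    using exists_least_iff[of "\<lambda>j. letterA ((lin b ^^ j) p)"] by blast
  have "(?F ^^ (j + i)) z = (lin b ^^ j) p"
    using funpow_Fmap_run_B[OF p(1) before_j] Fi by (simp add: funpow_add)
  moreover have "entry ((lin b ^^ j) p)"
    using p j before_j by (rule entry_first_letterA)
  ultimately show ?thesis by metis
qed

definition mean_b_run :: "real \<Rightarrow> real \<Rightarrow> bool" where
  "mean_b_run b L \<longleftrightarrow> (\<forall>y. entry y \<longrightarrow>
     (\<exists>C. \<forall>m. \<bar>(\<Sum>i<m. real (b_run b ((return_pt b ^^ i) y))) - real m * L\<bar> \<le> C))"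

lemma block_word_orbit:
  assumes k: "k \<ge> 2" and H: "reaches_A b" and E: "entry ((Fmap (zeta k) b ^^ t0) z)"
  defines "N \<equiv> \<lambda>i. b_run b ((return_pt b ^^ i) ((Fmap (zeta k) b ^^ t0) z))"
  shows "block_word (wordA (zeta k) b z) k (\<lambda>i. t0 + i * k + (\<Sum>j<i. N j)) N"
proof -
  let ?F = "Fmap (zeta k) b"
  let ?y = "(?F ^^ t0) z"
  let ?e = "\<lambda>i. t0 + i * k + (\<Sum>j<i. N j)"
  have E_i: "entry ((return_pt b ^^ i) ?y)" for i
    by (induction i) (simp_all add: E entry_return_pt[OF H])
  have e_i: "(?F ^^ ?e i) z = (return_pt b ^^ i) ?y" for i
  proof (induction i)
    case (Suc i)
    have "?e (Suc i) = (k + N i) + ?e i" by simp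
    then have "(?F ^^ ?e (Suc i)) z = (?F ^^ (k + N i)) ((?F ^^ ?e i) z)"
      by (simp only: funpow_add comp_apply)
    then show ?case
      using Fmap_orbit_from_entry(3)[OF k H E_i[of i]] Suc by (simp add: N_def)
  qed (simp add: funpow_add)
  have "wordA (zeta k) b z (?e i + j) \<longleftrightarrow> j < k" if "j < k + N i" for i j
  proof -
    have "?e i + j = j + ?e i" by simp
    then have eq: "(?F ^^ (?e i + j)) z = (?F ^^ j) ((return_pt b ^^ i) ?y)"
      using e_i[of i] by (simp only: funpow_add comp_apply)
    show ?thesis
    proof (cases "j < k")
      case False
      then show ?thesis
        using Fmap_orbit_from_entry(2)[OF k H E_i[of i], of j] that eq
        by (simp add: wordA_def N_def)
    qed (simp add: wordA_def eq Fmap_orbit_from_entry(1)[OF k H E_i[of i]])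
  qed
  moreover have "0 < N i" for i
    unfolding N_def using b_run_pos[OF H E_i] .
  ultimately show ?thesis
    unfolding block_word_def by (simp add: algebra_simps)
qed

lemma frequencies_of_mean_b_run:
  assumes k: "k \<ge> 2" and H: "reaches_A b" and L: "L > 0" and M: "mean_b_run b L"
    and z: "z \<noteq> (0, 0)"
  shows "(\<lambda>n. real (count_lt (ab_at (wordA (zeta k) b z)) n) / real n) \<longlonglongrightarrow> 1 / (real k + L)"
    and "(\<lambda>n. real (count_lt (wordA (zeta k) b z) n) / real n) \<longlonglongrightarrow> real k / (real k + L)"
proof -
  obtain t0 where E: "entry ((Fmap (zeta k) b ^^ t0) z)"
    using exists_entry_on_orbit[OF k H z] by blast
  then obtain C where C: "\<forall>m. \<bar>(\<Sum>i<m. real (b_run b ((return_pt b ^^ i) ((Fmap (zeta k) b ^^ t0) z))))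
      - real m * L\<bar> \<le> C"
    using M unfolding mean_b_run_def by blast
  note freq = block_word_frequencies[OF block_word_orbit[OF k H E] _ L, of C]
  show "(\<lambda>n. real (count_lt (ab_at (wordA (zeta k) b z)) n) / real n) \<longlonglongrightarrow> 1 / (real k + L)"
    by (rule freq(1)) (use k C in auto)
  show "(\<lambda>n. real (count_lt (wordA (zeta k) b z) n) / real n) \<longlonglongrightarrow> real k / (real k + L)"
    by (rule freq(2)) (use k C in auto)
qed

lemma theta_rho_of_mean_b_run:
  assumes k: "k \<ge> 2" and H: "reaches_A b" and L: "L > 0" and M: "mean_b_run b L"
  shows "(\<forall>z. z \<noteq> (0, 0) \<longrightarrow> theta_seq (zeta k) b z \<longlonglongrightarrow> 1 / (real k + L))
    \<and> rho_seq (zeta k) b \<longlonglongrightarrow> real k * (1 / (real k + L))"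
proof (intro conjI allI impI)
  fix z :: "real \<times> real" assume "z \<noteq> (0, 0)"
  then show "theta_seq (zeta k) b z \<longlonglongrightarrow> 1 / (real k + L)"
    using frequencies_of_mean_b_run(1)[OF k H L M] by (simp add: theta_seq_eq)
next
  note a_freq = frequencies_of_mean_b_run(2)[OF k H L M]
  have halves: "(x + x) / 2 = x" for x :: real
    by simp
  have "rho_seq (zeta k) b \<longlonglongrightarrow> (real k / (real k + L) + real k / (real k + L)) / 2"
    unfolding rho_seq_eq
    by (rule tendsto_divide[OF tendsto_add[OF a_freq a_freq] tendsto_const]) simp_all
  then show "rho_seq (zeta k) b \<longlonglongrightarrow> real k * (1 / (real k + L))"
    by (simp only: halves) simp
qed

subsection \<open>The hyperbolic case \<open>b \<le> -2\<close>\<close>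

lemma neg_mult_pos_le_neg2: "b \<le> -2 \<Longrightarrow> (X :: real) < 0 \<Longrightarrow> - 2 * X \<le> b * X"
  by (rule mult_right_mono_neg) auto

lemma reaches_A_le_neg2:
  assumes b: "b \<le> -2"
  shows "reaches_A b"
  unfolding reaches_A_def
proof (intro allI impI)
  fix w :: "real \<times> real" assume w: "w \<noteq> (0, 0)"
  obtain x v where xv: "w = (x, v)" by (cases w)
  consider "letterA w" | "letterA (lin b w)" | "\<not> letterA w" "\<not> letterA (lin b w)" by blast
  then show "\<exists>j. letterA ((lin b ^^ j) w)"
  proof cases
    case 1
    then show ?thesis by (intro exI[of _ 0]) simp
  next
    case 2
    then show ?thesis by (intro exI[of _ 1]) simp
  next
    case 3
    then have "x \<le> 0" "b * x - v < 0"
      using w xv by (auto simp: letterA_def lin_def)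
    with neg_mult_pos_le_neg2[OF b, of "b * x - v"] have "letterA (lin b (lin b w))"
      by (simp add: xv lin_def letterA_def)
    then show ?thesis by (intro exI[of _ 2]) (simp add: numeral_2_eq_2)
  qed
qed

lemma return_pt_le_neg2:
  assumes b: "b \<le> -2" and E: "entry (p, - q)"
  shows "letterA (- b * p - q, - p) \<Longrightarrow>
      b_run b (p, - q) = 1 \<and> return_pt b (p, - q) = (- b * p - q, - p)"
    and "\<not> letterA (- b * p - q, - p) \<Longrightarrow>
      b_run b (p, - q) = 2 \<and> return_pt b (p, - q) = (b * (- b * p - q) + p, - b * p - q)
      \<and> - b * p - q < 0"
proof -
  have p: "p \<ge> 0" and q: "q > 0" using E by (auto simp: entry_def)
  have n0: "\<not> letterA ((lin b ^^ 0) (- (p, - q)))"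
    using entry_uminus_not_letterA[OF E] by simp
  have A1: "(lin b ^^ 1) (- (p, - q)) = (- b * p - q, - p)"
    by (simp add: lin_def)
  have A2: "(lin b ^^ 2) (- (p, - q)) = (b * (- b * p - q) + p, - b * p - q)"
    by (simp add: lin_def numeral_2_eq_2)
  show "b_run b (p, - q) = 1 \<and> return_pt b (p, - q) = (- b * p - q, - p)"
    if l1: "letterA (- b * p - q, - p)"
  proof -
    have "b_run b (p, - q) = 1"
      by (rule b_run_eqI) (use n0 l1 A1 in auto)
    then show ?thesis using A1 by (simp add: return_pt_def)
  qed
  show "b_run b (p, - q) = 2 \<and> return_pt b (p, - q) = (b * (- b * p - q) + p, - b * p - q)
      \<and> - b * p - q < 0" if l1: "\<not> letterA (- b * p - q, - p)"
  proof -
    have x1: "- b * p - q < 0"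
      using l1 p q by (cases "p = 0") (auto simp: letterA_def)
    then have "letterA (b * (- b * p - q) + p, - b * p - q)"
      using neg_mult_pos_le_neg2[OF b x1] p by (simp add: letterA_def)
    then have "b_run b (p, - q) = 2"
      using n0 l1 A1 A2 by (intro b_run_eqI) (auto simp: less_2_cases_iff)
    then show ?thesis using A2 x1 by (simp add: return_pt_def)
  qed
qed

text \<open>After a b-run of length 2 the orbit enters the cone \<open>-y \<le> x\<close>, which it never leaves and
  where all b-runs have length 1.\<close>
lemma b_run_le_neg2:
  assumes b: "b \<le> -2" and E: "entry y"
  shows "b_run b y = 1 \<or> b_run b y = 2"
    and "- snd y \<le> fst y \<Longrightarrow> b_run b y = 1 \<and> - snd (return_pt b y) \<le> fst (return_pt b y)"
    and "b_run b y = 2 \<Longrightarrow> - snd (return_pt b y) \<le> fst (return_pt b y)"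
proof -
  define p q where "p = fst y" and "q = - snd y"
  have y: "y = (p, - q)" by (simp add: p_def q_def)
  have p: "p \<ge> 0" and q: "q > 0" using E y by (auto simp: entry_def)
  note cases = return_pt_le_neg2[OF b E[unfolded y]]
  show "b_run b y = 1 \<or> b_run b y = 2"
    using cases y by blast
  show "b_run b y = 1 \<and> - snd (return_pt b y) \<le> fst (return_pt b y)" if "- snd y \<le> fst y"
  proof -
    have "2 * p \<le> - b * p" using b p by (intro mult_right_mono) auto
    then have ge: "- b * p - q \<ge> p" using that y by simp
    moreover have "p > 0" using ge p q by (cases "p = 0") auto
    ultimately have "letterA (- b * p - q, - p)" by (simp add: letterA_def)
    then show ?thesis using cases(1) ge y by simp
  qed
  show "- snd (return_pt b y) \<le> fst (return_pt b y)" if "b_run b y = 2"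
  proof -
    have "\<not> letterA (- b * p - q, - p)" using that cases(1) y by auto
    then show ?thesis
      using cases(2) neg_mult_pos_le_neg2[OF b, of "- b * p - q"] p y by auto
  qed
qed

lemma mean_b_run_le_neg2:
  assumes b: "b \<le> -2"
  shows "mean_b_run b 1"
  unfolding mean_b_run_def
proof (intro allI impI)
  fix y0 :: "real \<times> real" assume E: "entry y0"
  have H: "reaches_A b" by (rule reaches_A_le_neg2[OF b])
  define s where "s i = (return_pt b ^^ i) y0" for i
  have E_s: "entry (s i)" for i
    unfolding s_def by (induction i) (simp_all add: E entry_return_pt[OF H])
  have s_Suc: "s (Suc i) = return_pt b (s i)" for i by (simp add: s_def)
  have "(\<Sum>i<m. 1) \<le> (\<Sum>i<m. real (b_run b (s i)))" for m
    by (intro sum_mono) (simp add: Suc_le_eq b_run_pos[OF H E_s])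
  then have lower: "real m \<le> (\<Sum>i<m. real (b_run b (s i)))" for m
    by simp
  have upper: "(\<Sum>i<m. real (b_run b (s i)))
      \<le> real m + (if - snd (s m) \<le> fst (s m) then 1 else 0)" for m
  proof (induction m)
    case (Suc m)
    then show ?case
      using b_run_le_neg2[OF b E_s[of m]] s_Suc[of m] by (auto split: if_splits)
  qed simp
  have "\<bar>(\<Sum>i<m. real (b_run b (s i))) - real m * 1\<bar> \<le> 1" for m
    using lower[of m] upper[of m] by (simp split: if_splits)
  then show "\<exists>C. \<forall>m. \<bar>(\<Sum>i<m. real (b_run b ((return_pt b ^^ i) y0))) - real m * 1\<bar> \<le> C"
    unfolding s_def by blast
qed

subsection \<open>The elliptic case \<open>b = 2 cos \<beta>\<close>, \<open>0 < \<beta> < \<pi>\<close>\<close>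

text \<open>In these coordinates \<open>lin (2 cos \<beta>)\<close> is the rotation by \<open>\<beta>\<close>.\<close>
definition polar_pt :: "real \<Rightarrow> real \<Rightarrow> real \<Rightarrow> real \<times> real" where
  "polar_pt \<beta> R \<phi> = (R * cos \<phi>, R * cos (\<phi> - \<beta>))"

lemma funpow_lin_polar_pt:
  "b = 2 * cos \<beta> \<Longrightarrow> (lin b ^^ j) (polar_pt \<beta> R \<phi>) = polar_pt \<beta> R (\<phi> + real j * \<beta>)"
  by (induction j) (simp_all add: polar_pt_def lin_def cos_add cos_diff algebra_simps)

lemma uminus_polar_pt: "- polar_pt \<beta> R \<phi> = polar_pt \<beta> R (\<phi> - pi)"
  by (simp add: polar_pt_def cos_diff sin_diff algebra_simps)

lemma letterA_polar_pt:
  "R > 0 \<Longrightarrow> letterA (polar_pt \<beta> R \<phi>) \<longleftrightarrow> cos \<phi> > 0 \<or> (cos \<phi> = 0 \<and> cos (\<phi> - \<beta>) < 0)"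
  by (auto simp: polar_pt_def letterA_def zero_less_mult_iff mult_less_0_iff)

lemma cos_neg_between: "pi / 2 < t \<Longrightarrow> t < 3 * pi / 2 \<Longrightarrow> cos t < 0"
  using cos_gt_zero_pi[of "t - pi"] by simp

lemma cos_pos_between: "3 * pi / 2 < t \<Longrightarrow> t < 5 * pi / 2 \<Longrightarrow> cos t > 0"
  using cos_gt_zero_pi[of "t - 2 * pi"] cos_periodic[of "t - 2 * pi"] by simp

lemma cos_add_2pi_int: "cos (y + 2 * pi * of_int n) = cos y"
  by (simp add: cos_add)

lemma exists_step_above:
  assumes \<beta>: "\<beta> > 0" and "x \<le> c"
  shows "\<exists>j::nat. c < x + real j * \<beta> \<and> x + real j * \<beta> \<le> c + \<beta>"
proof -
  define f where "f = \<lfloor>(c - x) / \<beta>\<rfloor>"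
  have f0: "f \<ge> 0" using assms by (simp add: f_def)
  have "real_of_int f \<le> (c - x) / \<beta>" "(c - x) / \<beta> < real_of_int f + 1"
    unfolding f_def by linarith+
  then have "real_of_int f * \<beta> \<le> c - x" "c - x < (real_of_int f + 1) * \<beta>"
    using \<beta> by (simp_all add: field_simps)
  then show ?thesis
    using f0 by (intro exI[of _ "nat (f + 1)"]) (auto simp: algebra_simps)
qed

lemma exists_first_step_reaching:
  assumes \<beta>: "\<beta> > 0" and "x < c"
  shows "\<exists>j::nat. j \<ge> 1 \<and> c \<le> x + real j * \<beta> \<and> x + (real j - 1) * \<beta> < c"
proof -
  define f where "f = \<lceil>(c - x) / \<beta>\<rceil>"
  have f1: "f \<ge> 1" using assms by (simp add: f_def)
  have "(c - x) / \<beta> \<le> real_of_int f" "real_of_int f - 1 < (c - x) / \<beta>"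
    unfolding f_def by linarith+
  then have "c - x \<le> real_of_int f * \<beta>" "(real_of_int f - 1) * \<beta> < c - x"
    using \<beta> by (simp_all add: field_simps)
  then show ?thesis
    using f1 by (intro exI[of _ "nat f"]) (auto simp: algebra_simps)
qed

context
  fixes b \<beta> :: real
  assumes \<beta>: "0 < \<beta>" "\<beta> < pi" and b: "b = 2 * cos \<beta>"
begin

lemma exists_polar_pt:
  assumes w: "w \<noteq> (0, 0)"
  shows "\<exists>R \<phi>. R > 0 \<and> w = polar_pt \<beta> R \<phi>"
proof -
  obtain x v where xv: "w = (x, v)" by (cases w)
  have s: "sin \<beta> > 0" using \<beta> by (intro sin_gt_zero) auto
  define q where "q = (v - x * cos \<beta>) / sin \<beta>"
  define R where "R = sqrt (x\<^sup>2 + q\<^sup>2)"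
  have "x \<noteq> 0 \<or> q \<noteq> 0" using w xv s by (auto simp: q_def)
  then have pos: "x\<^sup>2 + q\<^sup>2 \<noteq> 0"
    by (simp add: sum_power2_eq_zero_iff)
  then have R: "R > 0" "R\<^sup>2 = x\<^sup>2 + q\<^sup>2"
    by (simp_all add: R_def sum_power2_ge_zero add_nonneg_nonneg less_le)
  have "(x / R)\<^sup>2 + (q / R)\<^sup>2 = (x\<^sup>2 + q\<^sup>2) / R\<^sup>2"
    by (simp add: power_divide add_divide_distrib)
  then have "(x / R)\<^sup>2 + (q / R)\<^sup>2 = 1"
    using R pos by simp
  then obtain t where t: "x / R = cos t" "q / R = sin t" by (rule sincos_total_2pi)
  have "x = R * cos t" "q = R * sin t" using t R by (simp_all add: field_simps)
  moreover have "v = x * cos \<beta> + q * sin \<beta>" using s by (simp add: q_def)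
  ultimately have "w = polar_pt \<beta> R t" using xv by (simp add: polar_pt_def cos_diff algebra_simps)
  then show ?thesis using R by blast
qed

lemma not_letterA_polar_pt:
  assumes "R > 0" and "pi / 2 \<le> t" and "t < 3 * pi / 2"
  shows "\<not> letterA (polar_pt \<beta> R t)"
proof (cases "t = pi / 2")
  case True
  have "cos (pi / 2 - \<beta>) > 0" using \<beta> by (simp add: cos_diff sin_gt_zero)
  then show ?thesis using assms(1) unfolding True by (simp add: letterA_polar_pt)
next
  case False
  then show ?thesis using assms cos_neg_between[of t] by (simp add: letterA_polar_pt)
qed

lemma letterA_polar_pt_between:
  assumes "R > 0" and "3 * pi / 2 \<le> t" and "t < 5 * pi / 2"
  shows "letterA (polar_pt \<beta> R t)"
proof (cases "t = 3 * pi / 2")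
  case True
  have "cos (3 * pi / 2) = 0" "sin (3 * pi / 2) = -1"
    using cos_3over2_pi sin_3over2_pi by (simp_all add: mult.commute)
  then have "cos (3 * pi / 2 - \<beta>) < 0" using \<beta> by (simp add: cos_diff sin_gt_zero)
  then show ?thesis
    using assms(1) \<open>cos (3 * pi / 2) = 0\<close> unfolding True by (simp add: letterA_polar_pt)
next
  case False
  then show ?thesis using assms cos_pos_between[of t] by (simp add: letterA_polar_pt)
qed

lemma reaches_A_cos: "reaches_A b"
  unfolding reaches_A_def
proof (intro allI impI)
  fix w :: "real \<times> real" assume "w \<noteq> (0, 0)"
  then obtain R \<phi> where R: "R > 0" and w: "w = polar_pt \<beta> R \<phi>"
    using exists_polar_pt by blast
  define n where "n = \<lfloor>\<phi> / (2 * pi)\<rfloor>"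
  define x where "x = \<phi> - 2 * pi * real_of_int n"
  have "real_of_int n \<le> \<phi> / (2 * pi)" "\<phi> / (2 * pi) < real_of_int n + 1"
    unfolding n_def by linarith+
  then have x: "0 \<le> x" "x < 2 * pi"
    unfolding x_def by (simp_all add: field_simps)
  obtain j :: nat where "3 * pi / 2 \<le> x + real j * \<beta>" "x + real j * \<beta> < 5 * pi / 2"
  proof (cases "x \<ge> 3 * pi / 2")
    case True
    then show ?thesis using x that[of 0] by simp
  next
    case False
    then obtain j :: nat where "3 * pi / 2 < x + real j * \<beta>" "x + real j * \<beta> \<le> 3 * pi / 2 + \<beta>"
      using exists_step_above[OF \<beta>(1), of x "3 * pi / 2"] by auto
    then show ?thesis using \<beta> by (intro that[of j]) auto
  qed
  then have "letterA (polar_pt \<beta> R (x + real j * \<beta>))"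
    by (rule letterA_polar_pt_between[OF R])
  moreover have "polar_pt \<beta> R (x + real j * \<beta>) = polar_pt \<beta> R (\<phi> + real j * \<beta>)"
    using cos_add_2pi_int[of "x + real j * \<beta>" n] cos_add_2pi_int[of "x + real j * \<beta> - \<beta>" n]
    by (simp add: polar_pt_def x_def algebra_simps)
  ultimately show "\<exists>j. letterA ((lin b ^^ j) w)"
    using funpow_lin_polar_pt[OF b] w by metis
qed

text \<open>Normalizing the angle of \<open>-y\<close> to \<open>[\<pi>/2, \<pi>/2 + \<beta>)\<close>, a b-run turns it by \<open>N \<beta>\<close> into
  \<open>[3\<pi>/2, 3\<pi>/2 + \<beta>)\<close>; passing to \<open>-y'\<close> brings it back to the same interval.\<close>
lemma return_pt_cos:
  assumes R: "R > 0" and E: "entry y" and y: "- y = polar_pt \<beta> R \<phi>"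
    and \<phi>: "pi / 2 \<le> \<phi>" "\<phi> < pi / 2 + \<beta>"
  defines "\<phi>' \<equiv> \<phi> + real (b_run b y) * \<beta> - pi"
  shows "- return_pt b y = polar_pt \<beta> R \<phi>'" and "pi / 2 \<le> \<phi>'" and "\<phi>' < pi / 2 + \<beta>"
proof -
  obtain N :: nat where N: "N \<ge> 1" "3 * pi / 2 \<le> \<phi> + real N * \<beta>"
      "\<phi> + (real N - 1) * \<beta> < 3 * pi / 2"
    using exists_first_step_reaching[OF \<beta>(1), of \<phi> "3 * pi / 2"] \<phi> \<beta> by auto
  have "b_run b y = N"
  proof (rule b_run_eqI)
    fix i assume "i < N"
    then have "real i * \<beta> \<le> (real N - 1) * \<beta>"
      using \<beta> by (intro mult_right_mono) auto
    moreover have "0 \<le> real i * \<beta>" using \<beta> by simp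
    ultimately have "pi / 2 \<le> \<phi> + real i * \<beta>" "\<phi> + real i * \<beta> < 3 * pi / 2"
      using N(3) \<phi> by linarith+
    then have "\<not> letterA (polar_pt \<beta> R (\<phi> + real i * \<beta>))"
      by (rule not_letterA_polar_pt[OF R])
    then show "\<not> letterA ((lin b ^^ i) (- y))"
      by (simp add: y funpow_lin_polar_pt[OF b])
  next
    have "letterA (polar_pt \<beta> R (\<phi> + real N * \<beta>))"
      using N \<phi> \<beta> by (intro letterA_polar_pt_between[OF R]) (auto simp: algebra_simps)
    then show "letterA ((lin b ^^ N) (- y))"
      by (simp add: y funpow_lin_polar_pt[OF b])
  qed
  then show "- return_pt b y = polar_pt \<beta> R \<phi>'"
    by (simp add: return_pt_def y funpow_lin_polar_pt[OF b] uminus_polar_pt \<phi>'_def)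
  show "pi / 2 \<le> \<phi>'" "\<phi>' < pi / 2 + \<beta>"
    using N \<phi> \<open>b_run b y = N\<close> by (auto simp: \<phi>'_def algebra_simps)
qed

lemma normalize_entry_angle:
  assumes "R > 0" and E: "entry y" and y: "- y = polar_pt \<beta> R \<phi>"
  shows "\<exists>\<phi>0. pi / 2 \<le> \<phi>0 \<and> \<phi>0 < pi / 2 + \<beta> \<and> - y = polar_pt \<beta> R \<phi>0"
proof -
  have "R * cos \<phi> \<le> 0" "R * cos (\<phi> - \<beta>) > 0"
    using E y by (auto simp: entry_def polar_pt_def prod_eq_iff)
  then have c1: "cos \<phi> \<le> 0" and c2: "cos (\<phi> - \<beta>) > 0"
    using \<open>R > 0\<close> by (auto simp: zero_less_mult_iff mult_le_0_iff)
  define n where "n = \<lfloor>(\<phi> - pi / 2) / (2 * pi)\<rfloor>"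
  define \<phi>0 where "\<phi>0 = \<phi> - 2 * pi * real_of_int n"
  have "real_of_int n \<le> (\<phi> - pi / 2) / (2 * pi)" "(\<phi> - pi / 2) / (2 * pi) < real_of_int n + 1"
    unfolding n_def by linarith+
  then have r: "pi / 2 \<le> \<phi>0" "\<phi>0 < 5 * pi / 2"
    unfolding \<phi>0_def by (simp_all add: field_simps)
  have e1: "cos \<phi>0 = cos \<phi>"
    using cos_add_2pi_int[of \<phi>0 n] by (simp add: \<phi>0_def)
  have e2: "cos (\<phi>0 - \<beta>) = cos (\<phi> - \<beta>)"
    using cos_add_2pi_int[of "\<phi>0 - \<beta>" n] by (simp add: \<phi>0_def algebra_simps)
  have "\<phi>0 \<le> 3 * pi / 2"
    using cos_pos_between[of \<phi>0] r e1 c1 by fastforce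
  moreover have "\<not> pi / 2 + \<beta> \<le> \<phi>0"
  proof
    assume "pi / 2 + \<beta> \<le> \<phi>0"
    have "cos (\<phi>0 - \<beta>) \<le> 0"
    proof (cases "\<phi>0 - \<beta> = pi / 2")
      case False
      then show ?thesis
        using \<open>pi / 2 + \<beta> \<le> \<phi>0\<close> \<open>\<phi>0 \<le> 3 * pi / 2\<close> \<beta>
        by (intro less_imp_le cos_neg_between) auto
    next
      case True
      show ?thesis unfolding True by simp
    qed
    then show False using e2 c2 by simp
  qed
  ultimately show ?thesis
    using r e1 e2 y by (intro exI[of _ \<phi>0]) (simp add: polar_pt_def)
qed

lemma mean_b_run_cos: "mean_b_run b (pi / \<beta>)"
  unfolding mean_b_run_def
proof (intro allI impI)
  fix y0 :: "real \<times> real" assume E: "entry y0"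
  define s where "s i = (return_pt b ^^ i) y0" for i
  have E_s: "entry (s i)" for i
    unfolding s_def by (induction i) (simp_all add: E entry_return_pt[OF reaches_A_cos])
  obtain R \<phi> where R: "R > 0" and "- y0 = polar_pt \<beta> R \<phi>"
    using exists_polar_pt[OF uminus_nonzero[OF entry_nonzero[OF E]]] by blast
  then obtain \<phi>0 where \<phi>0: "pi / 2 \<le> \<phi>0" "\<phi>0 < pi / 2 + \<beta>" "- s 0 = polar_pt \<beta> R \<phi>0"
    using normalize_entry_angle[OF R E] by (auto simp: s_def)
  have angle: "\<exists>\<phi>. pi / 2 \<le> \<phi> \<and> \<phi> < pi / 2 + \<beta> \<and> - s m = polar_pt \<beta> R \<phi> \<and>
      (\<Sum>i<m. real (b_run b (s i))) * \<beta> = \<phi> - \<phi>0 + real m * pi" for m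
  proof (induction m)
    case 0
    then show ?case using \<phi>0 by auto
  next
    case (Suc m)
    then obtain \<phi> where \<phi>: "pi / 2 \<le> \<phi>" "\<phi> < pi / 2 + \<beta>" "- s m = polar_pt \<beta> R \<phi>"
      "(\<Sum>i<m. real (b_run b (s i))) * \<beta> = \<phi> - \<phi>0 + real m * pi" by blast
    note step = return_pt_cos[OF R E_s \<phi>(3) \<phi>(1,2)]
    show ?case
      using step \<phi>(4) by (intro exI[of _ "\<phi> + real (b_run b (s m)) * \<beta> - pi"])
        (simp add: s_def algebra_simps)
  qed
  have "\<bar>(\<Sum>i<m. real (b_run b (s i))) - real m * (pi / \<beta>)\<bar> \<le> 1" for m
  proof -
    obtain \<phi> where \<phi>: "pi / 2 \<le> \<phi>" "\<phi> < pi / 2 + \<beta>"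
      "(\<Sum>i<m. real (b_run b (s i))) * \<beta> = \<phi> - \<phi>0 + real m * pi"
      using angle by blast
    then have "(\<Sum>i<m. real (b_run b (s i))) - real m * (pi / \<beta>) = (\<phi> - \<phi>0) / \<beta>"
      using \<beta> by (simp add: field_simps)
    moreover have "\<bar>\<phi> - \<phi>0\<bar> \<le> \<beta>" using \<phi> \<phi>0 by auto
    ultimately show ?thesis using \<beta> by (simp add: abs_divide)
  qed
  then show "\<exists>C. \<forall>m. \<bar>(\<Sum>i<m. real (b_run b ((return_pt b ^^ i) y0))) - real m * (pi / \<beta>)\<bar> \<le> C"
    unfolding s_def by blast
qed

end

subsection \<open>The case \<open>b \<ge> 2\<close>\<close>

text \<open>For \<open>b \<ge> 2\<close> this cone lies in the b-region and is forward invariant.\<close>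
definition trapped :: "real \<times> real \<Rightarrow> bool" where
  "trapped w \<longleftrightarrow> fst w \<le> 0 \<and> fst w \<le> snd w \<and> w \<noteq> (0, 0)"

lemma trapped_not_letterA: "trapped w \<Longrightarrow> \<not> letterA w"
  by (cases w) (auto simp: trapped_def letterA_def)

lemma trapped_lin: "b \<ge> 2 \<Longrightarrow> trapped w \<Longrightarrow> trapped (lin b w)"
proof -
  assume b: "b \<ge> 2" and T: "trapped w"
  obtain x y where w: "w = (x, y)" by (cases w)
  have x: "x \<le> 0" "x \<le> y" using T w by (auto simp: trapped_def)
  have "b * x \<le> 2 * x" using b x by (intro mult_right_mono_neg) auto
  then show ?thesis
    using x w lin_nonzero[of w b] T by (simp add: trapped_def lin_def)
qed

lemma trapped_funpow_Fmap: "b \<ge> 2 \<Longrightarrow> trapped w \<Longrightarrow> trapped ((Fmap a b ^^ j) w)"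
proof (induction j)
  case (Suc j)
  then have "trapped ((Fmap a b ^^ j) w)" by simp
  then show ?case
    using trapped_lin[OF Suc.prems(1)] trapped_not_letterA
    by (simp add: Fmap_eq_lin trapped_def)
qed simp

lemma not_wordA_after_ab:
  assumes b: "b \<ge> 2" and z: "z \<noteq> (0, 0)" and ab: "ab_at (wordA a b z) t" and "t \<le> t'"
  shows "\<not> wordA a b z t'"
proof -
  let ?F = "Fmap a b"
  obtain s where t: "t = Suc s" using ab by (cases t) (auto simp: ab_at_def)
  obtain x y where xy: "(?F ^^ s) z = (x, y)" by (cases "(?F ^^ s) z")
  have la: "letterA (x, y)" using ab xy t by (simp add: ab_at_def wordA_def)
  have nz: "(x, y) \<noteq> (0, 0)" using funpow_Fmap_nonzero[OF z, of s a b] xy by simp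
  have step: "(?F ^^ t) z = lin a (x, y)" using xy la nz t by (simp add: Fmap_eq_lin)
  have "\<not> letterA (lin a (x, y))" using ab step by (simp add: ab_at_def wordA_def)
  then have "trapped ((?F ^^ t) z)"
    using step la lin_nonzero[OF nz, of a] by (auto simp: trapped_def lin_def letterA_def)
  then have "trapped ((?F ^^ d) ((?F ^^ t) z))" for d
    by (rule trapped_funpow_Fmap[OF b])
  moreover obtain d where "t' = d + t"
    using le_Suc_ex[OF \<open>t \<le> t'\<close>] by (auto simp: add.commute)
  ultimately show ?thesis
    using trapped_not_letterA by (simp add: wordA_def funpow_add)
qed

lemma count_ab_at_le_1:
  assumes "b \<ge> 2" and "z \<noteq> (0, 0)"
  shows "count_lt (ab_at (wordA a b z)) n \<le> 1"
proof -
  have no_later: "\<not> x < y" if x: "ab_at (wordA a b z) x" and y: "ab_at (wordA a b z) y" for x y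
  proof
    assume "x < y"
    then have "x \<le> y - 1" by linarith
    moreover have "wordA a b z (y - 1)" using y by (simp add: ab_at_def)
    ultimately show False using not_wordA_after_ab[OF assms x] by blast
  qed
  have "x = y" if "ab_at (wordA a b z) x" "ab_at (wordA a b z) y" for x y
    using no_later[OF that] no_later[OF that(2,1)] by simp
  then show ?thesis
    unfolding count_lt_def One_nat_def by (subst card_le_Suc0_iff_eq) auto
qed

lemma count_a_le_ge2:
  assumes k: "k \<ge> 2" and b: "b \<ge> 2" and z: "z = (0, 1) \<or> z = (0, -1)"
  shows "count_lt (wordA (zeta k) b z) n \<le> k"
proof -
  have T: "trapped (0, 1)" by (simp add: trapped_def)
  have Fk: "(Fmap (zeta k) b ^^ k) (0, -1) = (0, 1)"
    using funpow_Fmap_zeta_k[OF k, of "(0, -1)"] by (simp add: entry_def)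
  have "\<not> wordA (zeta k) b z t" if kt: "k \<le> t" for t
  proof -
    obtain d where t: "t = d + k" using le_Suc_ex[OF kt] by (auto simp: add.commute)
    have "(Fmap (zeta k) b ^^ t) (0, -1) = (Fmap (zeta k) b ^^ d) (0, 1)"
      using Fk by (simp add: t funpow_add)
    then show ?thesis
      using z trapped_not_letterA[OF trapped_funpow_Fmap[OF b T]] by (auto simp: wordA_def)
  qed
  then have "{t. t < n \<and> wordA (zeta k) b z t} \<subseteq> {..<k}"
    using not_le by auto
  then show ?thesis
    unfolding count_lt_def using card_mono[of "{..<k}"] by fastforce
qed

lemma theta_rho_ge2:
  assumes k: "k \<ge> 2" and b: "b \<ge> 2"
  shows "(\<forall>z. z \<noteq> (0, 0) \<longrightarrow> theta_seq (zeta k) b z \<longlonglongrightarrow> 0) \<and> rho_seq (zeta k) b \<longlonglongrightarrow> 0"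
proof (intro conjI allI impI)
  fix z :: "real \<times> real" assume z: "z \<noteq> (0, 0)"
  have "\<bar>real (count_lt (ab_at (wordA (zeta k) b z)) n)\<bar> \<le> 1" for n
    using count_ab_at_le_1[OF b z, of "zeta k" n] by simp
  then show "theta_seq (zeta k) b z \<longlonglongrightarrow> 0"
    unfolding theta_seq_eq by (rule ratio_tendsto_0_of_bounded)
next
  have "(\<lambda>n. real (count_lt (wordA (zeta k) b z) n) / real n) \<longlonglongrightarrow> 0"
    if "z = (0, 1) \<or> z = (0, -1)" for z
    using count_a_le_ge2[OF k b that] by (intro ratio_tendsto_0_of_bounded[of _ "real k"]) simp
  from this[of "(0, 1)"] this[of "(0, -1)"]
  have "rho_seq (zeta k) b \<longlonglongrightarrow> (0 + 0) / 2"
    unfolding rho_seq_eq by (intro tendsto_divide tendsto_add) auto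
  then show "rho_seq (zeta k) b \<longlonglongrightarrow> 0"
    by simp
qed

lemma theta_rho_on_C_a:
  assumes k: "k \<ge> 2"
  shows "(\<forall>z. z \<noteq> (0, 0) \<longrightarrow> theta_seq (zeta k) b z \<longlonglongrightarrow> theta_formula k b) \<and>
    rho_seq (zeta k) b \<longlonglongrightarrow> real k * theta_formula k b"
proof -
  consider "b \<ge> 2" | "-2 < b \<and> b < 2" | "b \<le> -2" by linarith
  then show ?thesis
  proof cases
    case 1
    then have "theta_formula k b = 0"
      by (cases "b = 2") (simp_all add: theta_formula_def)
    then show ?thesis using theta_rho_ge2[OF k 1] by simp
  next
    case 2
    define \<beta> where "\<beta> = arccos (b / 2)"
    have \<beta>: "0 < \<beta>" "\<beta> < pi" using arccos_lt_bounded[of "b / 2"] 2 by (auto simp: \<beta>_def)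
    have b: "b = 2 * cos \<beta>" using 2 by (simp add: \<beta>_def)
    have "\<not> b > 2" "\<bar>b\<bar> \<le> 2" using 2 by auto
    then have "theta_formula k b = 1 / (real k + pi / \<beta>)"
      using \<beta> by (simp add: theta_formula_def \<beta>_def[symmetric] field_simps)
    then show ?thesis
      using theta_rho_of_mean_b_run[OF k reaches_A_cos[OF \<beta> b] _ mean_b_run_cos[OF \<beta> b]] \<beta>
      by simp
  next
    case 3
    have "pi + pi * real k > 0" by (simp add: add_pos_nonneg)
    then have "theta_formula k b = 1 / (real k + 1)"
      using 3 by (cases "b = -2") (simp_all add: theta_formula_def field_simps)
    then show ?thesis
      using theta_rho_of_mean_b_run[OF k reaches_A_le_neg2[OF 3] _ mean_b_run_le_neg2[OF 3]]
      by simp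
  qed
qed

lemma wordA_swap:
  assumes z: "z \<noteq> (0, 0)"
  shows "wordA a b z t \<longleftrightarrow> \<not> wordA b a (- z) t"
proof -
  have "(Fmap a b ^^ t) z = - (Fmap b a ^^ t) (- z)"
    using funpow_Fmap_uminus[of t a b "- z"] by simp
  then show ?thesis
    using letterA_uminus[OF funpow_Fmap_nonzero[OF uminus_nonzero[OF z]]] by (simp add: wordA_def)
qed

lemma theta_rho_on_C_b:
  assumes l: "l \<ge> 2"
  shows "(\<forall>z. z \<noteq> (0, 0) \<longrightarrow> theta_seq a (zeta l) z \<longlonglongrightarrow> theta_formula l a) \<and>
    rho_seq a (zeta l) \<longlonglongrightarrow> 1 - real l * theta_formula l a"
proof (intro conjI allI impI)
  note C_a = theta_rho_on_C_a[OF l, of a]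
  fix z :: "real \<times> real" assume z: "z \<noteq> (0, 0)"
  let ?w = "wordA (zeta l) a (- z)"
  have word: "wordA a (zeta l) z = (\<lambda>t. \<not> ?w t)"
    using wordA_swap[OF z] by blast
  have "theta_seq (zeta l) a (- z) \<longlonglongrightarrow> theta_formula l a"
    using C_a uminus_nonzero[OF z] by blast
  then have "(\<lambda>n. (real (count_lt (ab_at (\<lambda>t. \<not> ?w t)) n) - real (count_lt (ab_at ?w) n)) / real n
      + real (count_lt (ab_at ?w) n) / real n) \<longlonglongrightarrow> 0 + theta_formula l a"
    unfolding theta_seq_eq by (intro tendsto_add ratio_tendsto_0_of_bounded[OF count_lt_ab_at_not])
  then show "theta_seq a (zeta l) z \<longlonglongrightarrow> theta_formula l a"
    by (simp add: theta_seq_eq word diff_divide_distrib)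
next
  note C_a = theta_rho_on_C_a[OF l, of a]
  have "(\<lambda>n. 1 - rho_seq (zeta l) a n) \<longlonglongrightarrow> 1 - real l * theta_formula l a"
    using C_a by (intro tendsto_diff tendsto_const) auto
  moreover have "1 - rho_seq (zeta l) a n = rho_seq a (zeta l) n" if "n \<ge> 1" for n
  proof -
    have "count_a a (zeta l) z n + count_a (zeta l) a (- z) n = n" if "z \<noteq> (0, 0)" for z
    proof -
      have "wordA a (zeta l) z = (\<lambda>t. \<not> wordA (zeta l) a (- z) t)"
        using wordA_swap[OF that] by blast
      then show ?thesis
        using count_lt_not_add[of "wordA (zeta l) a (- z)" n] by (simp add: count_a_eq_count_lt)
    qed
    from this[of "(0, 1)"] this[of "(0, -1)"] show ?thesis
      using that by (simp add: rho_seq_def field_simps)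
  qed
  ultimately show "rho_seq a (zeta l) \<longlonglongrightarrow> 1 - real l * theta_formula l a"
    by (rule Lim_transform_eventually[OF _ eventually_sequentiallyI])
qed

theorem mainTheorem3:
  shows "(\<forall>k::nat. k \<ge> 2 \<longrightarrow> (\<forall>b::real.
            (\<forall>z. z \<noteq> (0, 0) \<longrightarrow> theta_seq (zeta k) b z \<longlonglongrightarrow> theta_formula k b) \<and>
            rho_seq (zeta k) b \<longlonglongrightarrow> real k * theta_formula k b))
       \<and> (\<forall>l::nat. l \<ge> 2 \<longrightarrow> (\<forall>a::real.
            (\<forall>z. z \<noteq> (0, 0) \<longrightarrow> theta_seq a (zeta l) z \<longlonglongrightarrow> theta_formula l a) \<and>
            rho_seq a (zeta l) \<longlonglongrightarrow> 1 - real l * theta_formula l a))"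
  using theta_rho_on_C_a theta_rho_on_C_b by blast

end
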